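(* Let $G=HN$ be a finite non-Frobenius $2$-transitive affine group of degree $p^k$ ($p$ prime), with $N\cong\mathbb F_p^k$ and $H\le\mathrm{GL}_k(p)$ the stabiliser of $0$, and suppose $\mathrm{SL}_2(q)\trianglelefteq H$ where $q^2=p^k$ (acting naturally on $\mathbb F_q^2=\mathbb F_p^k$). Then $\kappa(G)=2$ if and only if $G\cong S_4$.
   Context: A derangement is an element fixing no point; $\kappa(G)$ is the number of conjugacy classes of derangements. A Frobenius group is a transitive non-regular group in which only the identity fixes more than one point. *)

theory Defs
  imports "HOL-Algebra.Algebra" "HOL-Library.Product_Plus"
begin

text \<open>The natural module V = F_q^2 of SL_2(q) is modelled as the type 'f \<times> 'f for a finite
field 'f with q elements; its additive group is the elementary abelian group F_p^k.\<close>

definition perm_grp :: "('v \<Rightarrow> 'v) set \<Rightarrow> ('v \<Rightarrow> 'v) monoid" where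
  "perm_grp S = \<lparr> carrier = S, monoid.mult = (\<circ>), one = id \<rparr>"

text \<open>GL_k(p): the F_p-linear (equivalently, additive) bijections of V = F_p^k.\<close>
definition GL_V :: "(('f::field \<times> 'f) \<Rightarrow> ('f \<times> 'f)) set" where
  "GL_V = {h. bij h \<and> (\<forall>u v. h (u + v) = h u + h v)}"

definition sl2_map :: "'f::field \<Rightarrow> 'f \<Rightarrow> 'f \<Rightarrow> 'f \<Rightarrow> ('f \<times> 'f) \<Rightarrow> ('f \<times> 'f)" where
  "sl2_map a b c d = (\<lambda>(x, y). (a * x + b * y, c * x + d * y))"

definition SL2 :: "(('f::field \<times> 'f) \<Rightarrow> ('f \<times> 'f)) set" where
  "SL2 = {sl2_map a b c d | a b c d. a * d - b * c = 1}"

definition affine_grp :: "(('f::field \<times> 'f) \<Rightarrow> ('f \<times> 'f)) set \<Rightarrow> (('f \<times> 'f) \<Rightarrow> ('f \<times> 'f)) set" where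
  "affine_grp H = {(\<lambda>v. h v + w) | h w. h \<in> H}"

definition transitive_on :: "('v \<Rightarrow> 'v) set \<Rightarrow> bool" where
  "transitive_on G = (\<forall>u v. \<exists>g\<in>G. g u = v)"

definition two_transitive :: "('v \<Rightarrow> 'v) set \<Rightarrow> bool" where
  "two_transitive G = (\<forall>u v u' v'. u \<noteq> v \<longrightarrow> u' \<noteq> v' \<longrightarrow> (\<exists>g\<in>G. g u = u' \<and> g v = v'))"

definition regular :: "('v \<Rightarrow> 'v) set \<Rightarrow> bool" where
  "regular G = (transitive_on G \<and> (\<forall>g\<in>G. \<forall>v. g v = v \<longrightarrow> g = id))"

definition frobenius :: "('v \<Rightarrow> 'v) set \<Rightarrow> bool" where
  "frobenius G = (transitive_on G \<and> \<not> regular G \<and>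
     (\<forall>g\<in>G. g \<noteq> id \<longrightarrow> card {v. g v = v} \<le> 1))"

definition derangement :: "('v \<Rightarrow> 'v) \<Rightarrow> bool" where
  "derangement g = (\<forall>v. g v \<noteq> v)"

definition conj_class :: "('v \<Rightarrow> 'v) set \<Rightarrow> ('v \<Rightarrow> 'v) \<Rightarrow> ('v \<Rightarrow> 'v) set" where
  "conj_class G g = {x \<circ> g \<circ> Hilbert_Choice.inv x | x. x \<in> G}"

definition kappa :: "('v \<Rightarrow> 'v) set \<Rightarrow> nat" where
  "kappa G = card {conj_class G g | g. g \<in> G \<and> derangement g}"

end

theory Submission
  imports Defs
begin

(* The argument below does not use the hypotheses that
   q^2 is a prime power, that G is 2-transitive, or that G is not a Frobenius group.

   Every element of H normalises SL_2(q) and is therefore semilinear; conjugacy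
   classes of G are compared through invariants of linear parts (h = 1, (h - 1)^2 = 0,
   determinants).  Two derangements always lie in different classes: the unit translation
   and a translate of the unit transvection.
   - If q \<ge> 3, a third class of derangements exists (either a translate of an element of
     H fixing a vector with (h - 1)^2 \<noteq> 0, or a translate of another transvection), so
     kappa(G) \<ge> 3; and |G| = |H| q^2 \<ge> 27, so G is not S_4.
   - If q = 2, every permutation of the four points of V is affine with linear part in
     SL_2(2), so G = Sym(V) \<cong> S_4, and a finite check shows every derangement is conjugate
     to one of the two derangements above, so kappa(G) = 2.
   The file develops linear algebra on V, the semilinearity of normalisers of SL_2(q),
   conjugacy classes in permutation groups, affine maps, then the two cases, and finally
   the theorem. *)

section \<open>Linear algebra on V = F_q^2\<close>

definition smul :: "'f::field \<Rightarrow> 'f \<times> 'f \<Rightarrow> 'f \<times> 'f" where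
  "smul l v = (l * fst v, l * snd v)"

definition flinear :: "('f::field \<times> 'f \<Rightarrow> 'f \<times> 'f) \<Rightarrow> bool" where
  "flinear f \<longleftrightarrow> additive f \<and> (\<forall>l v. f (smul l v) = smul l (f v))"

lemma flinearD:
  assumes "flinear f"
  shows "f (u + v) = f u + f v" "f (u - v) = f u - f v" "f (smul l v) = smul l (f v)"
  using assms additive.add additive.diff unfolding flinear_def by blast+

lemma smul_add: "smul l (u + v) = smul l u + smul l v"
  and smul_diff: "smul l (u - v) = smul l u - smul l v"
  by (simp_all add: smul_def algebra_simps)

lemma flinear_sl2_map: "flinear (sl2_map a b c d)"
  unfolding flinear_def additive_def sl2_map_def smul_def
  by (auto simp: algebra_simps split: prod.splits)

lemma sl2_map_apply [simp]: "sl2_map a b c d (x, y) = (a * x + b * y, c * x + d * y)"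
  by (simp add: sl2_map_def)

lemma sl2_map_zero [simp]: "sl2_map a b c d 0 = 0"
  by (simp add: sl2_map_def zero_prod_def)

lemma additive_sl2_map: "additive (sl2_map a b c d)"
  using flinear_sl2_map flinear_def by blast

lemma sl2_map_in_SL2: "a * d - b * c = 1 \<Longrightarrow> sl2_map a b c d \<in> SL2"
  unfolding SL2_def by blast

lemma SL2_flinear: "S \<in> SL2 \<Longrightarrow> flinear S"
  unfolding SL2_def using flinear_sl2_map by blast

abbreviation upper_tr :: "'f::field \<Rightarrow> 'f \<times> 'f \<Rightarrow> 'f \<times> 'f" where
  "upper_tr b \<equiv> sl2_map 1 b 0 1"

abbreviation lower_tr :: "'f::field \<Rightarrow> 'f \<times> 'f \<Rightarrow> 'f \<times> 'f" where
  "lower_tr b \<equiv> sl2_map 1 0 b 1"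

lemma upper_tr_SL2: "upper_tr b \<in> SL2" and lower_tr_SL2: "lower_tr b \<in> SL2"
  by (simp_all add: sl2_map_in_SL2)

text \<open>This is what makes normalisers of SL_2(q) semilinear.\<close>

lemma smul_by_transvections:
  "smul l v = (upper_tr l (lower_tr 1 v - v) - (lower_tr 1 v - v))
            + (lower_tr l (upper_tr 1 v - v) - (upper_tr 1 v - v))"
  by (cases v) (simp add: smul_def)

lemma commuting_is_scalar:
  fixes F :: "'f::field \<times> 'f \<Rightarrow> 'f \<times> 'f"
  assumes F: "flinear F"
    and upper: "\<And>v. F (upper_tr 1 v) = upper_tr 1 (F v)"
    and lower: "\<And>v. F (lower_tr 1 v) = lower_tr 1 (F v)"
  shows "F v = smul (fst (F (1, 0))) v"
proof -
  obtain a c where e1: "F (1, 0) = (a, c)" by fastforce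
  obtain b d where e2: "F (0, 1) = (b, d)" by fastforce
  have sum: "F (1, 1) = (a + b, c + d)"
    using flinearD(1)[OF F, of "(1, 0)" "(0, 1)"] e1 e2 by simp
  have "F (1, 1) = upper_tr 1 (b, d)" using upper[of "(0, 1)"] e2 by simp
  then have "a = d" "c = 0" using sum by auto
  moreover have "F (1, 1) = lower_tr 1 (a, c)" using lower[of "(1, 0)"] e1 by simp
  then have "b = 0" using sum \<open>c = 0\<close> by auto
  moreover have "v = smul (fst v) (1, 0) + smul (snd v) (0, 1)"
    by (simp add: smul_def)
  then have "F v = smul (fst v) (F (1, 0)) + smul (snd v) (F (0, 1))"
    using flinearD[OF F] by metis
  ultimately show ?thesis using e1 e2 by (simp add: smul_def mult.commute)
qed

lemma flinear_transvection_part: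
  assumes "flinear A" "flinear B"
  shows "flinear (\<lambda>v. A (B v - v) - (B v - v))"
proof -
  have "B (u + v) - (u + v) = (B u - u) + (B v - v)" for u v
    by (simp add: flinearD(1)[OF assms(2)])
  moreover have "B (smul l v) - smul l v = smul l (B v - v)" for l v
    by (simp add: flinearD(3)[OF assms(2)] smul_diff)
  ultimately show ?thesis
    unfolding flinear_def additive_def by (simp add: flinearD[OF assms(1)] smul_diff)
qed

lemma flinear_plus:
  assumes "flinear F" "flinear K"
  shows "flinear (\<lambda>v. F v + K v)"
  using assms unfolding flinear_def additive_def by (auto simp: smul_add algebra_simps)

text \<open>Main structural fact: an additive permutation c of V normalising SL_2(q) is semilinear,
  c (l v) = phi(l) c(v) for an additive map phi with phi 1 = 1.
  Conjugating the decomposition of scalar multiplication into transvections shows that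
  c l c^-1 is linear; it commutes with SL_2(q), hence is a scalar.\<close>

lemma normaliser_of_SL2_semilinear:
  fixes c :: "'f::field \<times> 'f \<Rightarrow> 'f \<times> 'f"
  assumes bij: "bij c" and add: "additive c"
    and norm: "\<And>S. S \<in> SL2 \<Longrightarrow> c \<circ> S \<circ> inv' c \<in> SL2"
    and norm_inv: "\<And>S. S \<in> SL2 \<Longrightarrow> inv' c \<circ> S \<circ> c \<in> SL2"
  obtains \<phi> where "additive \<phi>" "\<phi> 1 = 1" "\<And>l v. c (smul l v) = smul (\<phi> l) (c v)"
proof -
  have c_inv: "c (inv' c v) = v" for v using bij by (simp add: bij_is_surj surj_f_inv_f)
  have inv_c: "inv' c (c v) = v" for v using bij by (simp add: bij_is_inj)
  define cnj :: "('f \<times> 'f \<Rightarrow> 'f \<times> 'f) \<Rightarrow> _" where "cnj S = c \<circ> S \<circ> inv' c" for S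
  have cnj_lin: "flinear (cnj S)" if "S \<in> SL2" for S
    using SL2_flinear norm that unfolding cnj_def by blast
  have cnj_apply: "cnj S (c v) = c (S v)" for S v by (simp add: cnj_def inv_c)
  have scalar: "\<exists>k. \<forall>w. c (smul l w) = smul k (c w)" for l
  proof -
    define K where "K v = c (smul l (inv' c v))" for v
    have K_expr: "K v = cnj (upper_tr l) (cnj (lower_tr 1) v - v) - (cnj (lower_tr 1) v - v)
        + (cnj (lower_tr l) (cnj (upper_tr 1) v - v) - (cnj (upper_tr 1) v - v))" for v
    proof -
      obtain z where v: "v = c z" using c_inv by metis
      show ?thesis
        unfolding v K_def inv_c cnj_apply additive.diff[OF add, symmetric]
          additive.add[OF add, symmetric]
        by (subst smul_by_transvections) (rule refl)
    qed
    have K_lin: "flinear K"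
      unfolding K_expr[abs_def]
      by (intro flinear_plus flinear_transvection_part cnj_lin upper_tr_SL2 lower_tr_SL2)
    have K_comm: "K (S v) = S (K v)" if S: "S \<in> SL2" for S v
    proof -
      define T where "T = inv' c \<circ> S \<circ> c"
      have T: "flinear T" unfolding T_def using SL2_flinear norm_inv S by blast
      have cT: "c (T w) = S (c w)" for w by (simp add: T_def c_inv)
      have "K (S v) = c (smul l (T (inv' c v)))" by (simp add: K_def T_def c_inv)
      also have "\<dots> = c (T (smul l (inv' c v)))" by (simp add: flinearD(3)[OF T])
      also have "\<dots> = S (K v)" by (simp add: cT K_def)
      finally show ?thesis .
    qed
    have "K v = smul (fst (K (1, 0))) v" for v
      by (rule commuting_is_scalar[OF K_lin]) (simp_all add: K_comm upper_tr_SL2 lower_tr_SL2)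
    then show ?thesis by (metis K_def inv_c)
  qed
  then obtain \<phi> where \<phi>: "\<And>l w. c (smul l w) = smul (\<phi> l) (c w)" by metis
  define w0 where "w0 = inv' c (1, 0)"
  have cw0: "c w0 = (1, 0)" by (simp add: w0_def c_inv)
  have "smul (\<phi> 1) (1, 0) = (1::'f, 0::'f)" using \<phi>[of 1 w0] cw0 by (simp add: smul_def)
  then have "\<phi> 1 = 1" by (simp add: smul_def)
  moreover have "additive \<phi>"
  proof
    fix a b
    have "smul (a + b) w0 = smul a w0 + smul b w0" by (simp add: smul_def algebra_simps)
    then have "c (smul (a + b) w0) = c (smul a w0) + c (smul b w0)" by (simp add: additive.add[OF add])
    then show "\<phi> (a + b) = \<phi> a + \<phi> b" using \<phi> cw0 by (simp add: smul_def)
  qed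
  ultimately show ?thesis using that \<phi> by blast
qed

section \<open>Conjugacy classes in groups of permutations\<close>

locale bij_group =
  fixes G :: "('v \<Rightarrow> 'v) set"
  assumes bij: "g \<in> G \<Longrightarrow> bij g"
    and id_closed: "id \<in> G"
    and comp_closed: "f \<in> G \<Longrightarrow> g \<in> G \<Longrightarrow> f \<circ> g \<in> G"
    and inv_closed: "g \<in> G \<Longrightarrow> inv' g \<in> G"
begin

lemma conj_class_iff: "f \<in> conj_class G g \<longleftrightarrow> (\<exists>a\<in>G. f \<circ> a = a \<circ> g)"
proof
  assume "f \<in> conj_class G g"
  then obtain a where a: "a \<in> G" "f = a \<circ> g \<circ> inv' a" unfolding conj_class_def by blast
  then have "f \<circ> a = a \<circ> g" using bij[OF a(1)] by (simp add: fun_eq_iff bij_is_inj)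
  then show "\<exists>a\<in>G. f \<circ> a = a \<circ> g" using a(1) by blast
next
  assume "\<exists>a\<in>G. f \<circ> a = a \<circ> g"
  then obtain a where a: "a \<in> G" "f \<circ> a = a \<circ> g" by blast
  have "f = f \<circ> a \<circ> inv' a" using bij[OF a(1)] by (simp add: fun_eq_iff bij_is_surj surj_f_inv_f)
  then have "f = a \<circ> g \<circ> inv' a" by (simp add: a(2))
  then show "f \<in> conj_class G g" unfolding conj_class_def using a(1) by blast
qed

lemma conj_class_self: "g \<in> G \<Longrightarrow> g \<in> conj_class G g"
  using id_closed by (auto simp: conj_class_iff)

lemma conj_class_sym:
  assumes "f \<in> conj_class G g" shows "g \<in> conj_class G f"
proof -
  obtain a where a: "a \<in> G" "f \<circ> a = a \<circ> g" using assms by (auto simp: conj_class_iff)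
  have "g \<circ> inv' a = inv' a \<circ> f"
  proof
    fix v
    have "a (g (inv' a v)) = f v"
      using fun_cong[OF a(2), of "inv' a v"] bij[OF a(1)] by (simp add: bij_is_surj surj_f_inv_f)
    then show "(g \<circ> inv' a) v = (inv' a \<circ> f) v" using bij[OF a(1)] by (metis bij_inv_eq_iff comp_apply)
  qed
  then show ?thesis using inv_closed[OF a(1)] by (auto simp: conj_class_iff)
qed

lemma conj_class_trans:
  assumes "f \<in> conj_class G g" "g \<in> conj_class G k" shows "f \<in> conj_class G k"
proof -
  obtain a b where ab: "a \<in> G" "f \<circ> a = a \<circ> g" "b \<in> G" "g \<circ> b = b \<circ> k"
    using assms by (auto simp: conj_class_iff)
  have "f \<circ> (a \<circ> b) = a \<circ> (g \<circ> b)" by (simp add: ab(2) o_assoc)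
  then have "a \<circ> b \<in> G" "f \<circ> (a \<circ> b) = (a \<circ> b) \<circ> k"
    using comp_closed ab by (simp_all add: o_assoc)
  then show ?thesis by (auto simp: conj_class_iff)
qed

lemma conj_class_eq:
  assumes "f \<in> conj_class G g" shows "conj_class G f = conj_class G g"
  using conj_class_trans conj_class_sym assms by blast

lemma conj_class_separate:
  assumes "f \<in> G" "\<And>x. x \<in> conj_class G g \<Longrightarrow> P x" "\<not> P f"
  shows "conj_class G f \<noteq> conj_class G g"
  using conj_class_self[OF assms(1)] assms(2,3) by blast

end

section \<open>Affine maps of V\<close>

lemma additive_inv: "additive c \<Longrightarrow> bij c \<Longrightarrow> additive (inv' c)"
  unfolding additive_def by (metis bij_inv_eq_iff)

definition lin_part :: "('v::ab_group_add \<Rightarrow> 'v) \<Rightarrow> 'v \<Rightarrow> 'v" where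
  "lin_part f v = f v - f 0"

lemma lin_part_affine: "additive h \<Longrightarrow> lin_part (\<lambda>v. h v + w) = h"
  by (simp add: lin_part_def additive.zero fun_eq_iff)

lemma lin_part_intertwined:
  fixes c h :: "'v::ab_group_add \<Rightarrow> 'v"
  assumes intertwine: "f \<circ> (\<lambda>v. c v + u) = (\<lambda>v. c v + u) \<circ> (\<lambda>v. h v + w)"
    and c: "additive c" "bij c" and h: "additive h"
  shows "lin_part f = c \<circ> h \<circ> inv' c"
proof
  fix x
  have f_eq: "f (c v + u) = c (h v + w) + u" for v using fun_cong[OF intertwine, of v] by simp
  have c_inv: "c (inv' c y) = y" for y using c(2) by (simp add: bij_is_surj surj_f_inv_f)
  have "lin_part f x = c (h (inv' c (x - u))) - c (h (inv' c (- u)))"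
    using f_eq[of "inv' c (x - u)"] f_eq[of "inv' c (- u)"] c_inv
    by (simp add: lin_part_def additive.add[OF c(1)])
  also have "\<dots> = c (h (inv' c (x - u) - inv' c (- u)))"
    by (simp add: additive.diff[OF c(1)] additive.diff[OF h])
  also have "inv' c (x - u) - inv' c (- u) = inv' c x"
    by (simp add: additive.diff[OF additive_inv[OF c], symmetric])
  finally show "lin_part f x = (c \<circ> h \<circ> inv' c) x" by simp
qed

text \<open>Maps h with (h - 1)^2 = 0 (the identity and the transvections); this property is
  invariant under conjugation by additive permutations and separates conjugacy classes.\<close>

definition sq_unipotent :: "('v::ab_group_add \<Rightarrow> 'v) \<Rightarrow> bool" where
  "sq_unipotent h \<longleftrightarrow> (\<forall>v. h (h v - v) - (h v - v) = 0)"

lemma sq_unipotent_conj: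
  fixes c h :: "'v::ab_group_add \<Rightarrow> 'v"
  assumes c: "additive c" "bij c" and h: "sq_unipotent h"
  shows "sq_unipotent (c \<circ> h \<circ> inv' c)"
  unfolding sq_unipotent_def
proof
  fix v
  define z where "z = inv' c v"
  have v: "v = c z" using c(2) by (simp add: z_def bij_is_surj surj_f_inv_f)
  have inv_c: "inv' c (c y) = y" for y using c(2) by (simp add: bij_is_inj)
  have "(c \<circ> h \<circ> inv' c) ((c \<circ> h \<circ> inv' c) v - v) - ((c \<circ> h \<circ> inv' c) v - v)
      = c (h (h z - z) - (h z - z))"
    unfolding v by (simp add: inv_c additive.diff[OF c(1), symmetric])
  also have "\<dots> = 0" using h additive.zero[OF c(1)] by (simp add: sq_unipotent_def)
  finally show "(c \<circ> h \<circ> inv' c) ((c \<circ> h \<circ> inv' c) v - v) - ((c \<circ> h \<circ> inv' c) v - v) = 0" .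
qed

lemma sq_unipotent_upper_tr: "sq_unipotent (upper_tr b)"
  by (simp add: sq_unipotent_def sl2_map_def split: prod.splits)

text \<open>If an additive map of a finite group has a nonzero fixed point, then h - 1 is not
  injective, hence not surjective, and some translate v \<mapsto> h v + w is a derangement.\<close>

lemma derangement_translate:
  fixes h :: "'v::{ab_group_add, finite} \<Rightarrow> 'v"
  assumes "additive h" "h e = e" "e \<noteq> 0"
  obtains w where "derangement (\<lambda>v. h v + w)"
proof -
  define k where "k v = h v - v" for v
  have "k e = k 0" using assms(2) additive.zero[OF assms(1)] by (simp add: k_def)
  then have "\<not> inj k" using assms(3) unfolding inj_def by metis
  then have "\<not> surj k" using finite_UNIV_surj_inj[of k] by auto
  then obtain w where w: "w \<notin> range k" by auto
  have "h v + w \<noteq> v" for v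
  proof
    assume "h v + w = v"
    then have "k (- v) = w" using additive.minus[OF assms(1)] by (simp add: k_def algebra_simps)
    then show False using w by (metis rangeI)
  qed
  then show ?thesis using that unfolding derangement_def by blast
qed

lemma card_affine_grp:
  fixes H :: "(('f::{field,finite} \<times> 'f) \<Rightarrow> ('f \<times> 'f)) set"
  assumes "\<And>h. h \<in> H \<Longrightarrow> h 0 = 0"
  shows "card (affine_grp H) = card H * card (UNIV :: ('f \<times> 'f) set)"
proof -
  define F :: "_ \<Rightarrow> ('f \<times> 'f \<Rightarrow> 'f \<times> 'f)" where "F = (\<lambda>(h, w) v. h v + w)"
  have img: "affine_grp H = F ` (H \<times> UNIV)" unfolding affine_grp_def F_def by auto
  have "inj_on F (H \<times> UNIV)"
  proof (rule inj_onI, clarify)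
    fix h w h' w' assume hh: "h \<in> H" "h' \<in> H" and eq: "F (h, w) = F (h', w')"
    have "F (h, w) 0 = F (h', w') 0" using eq by simp
    then have "w = w'" using assms[OF hh(1)] assms[OF hh(2)] by (simp add: F_def)
    then show "h = h' \<and> w = w'" using eq by (auto simp: F_def fun_eq_iff)
  qed
  then show ?thesis
    unfolding img by (simp add: card_image card_cartesian_product)
qed

lemma card_UNIV_pair: "card (UNIV :: ('a \<times> 'a) set) = card (UNIV :: 'a set) * card (UNIV :: 'a set)"
  by (simp add: card_cartesian_product UNIV_Times_UNIV[symmetric] del: UNIV_Times_UNIV)

lemma perm_grp_all_bij_iso:
  fixes n :: nat
  assumes card: "card (UNIV :: 'v::finite set) = n"
  shows "perm_grp {f :: 'v \<Rightarrow> 'v. bij f} \<cong> sym_group n"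
proof -
  obtain \<beta> :: "nat \<Rightarrow> 'v" where \<beta>: "bij_betw \<beta> {1..n} UNIV"
    using ex_bij_betw_nat_finite_1[of "UNIV :: 'v set"] card by auto
  define \<gamma> where "\<gamma> = inv_into {1..n} \<beta>"
  have \<gamma>: "bij_betw \<gamma> UNIV {1..n}" unfolding \<gamma>_def by (rule bij_betw_inv_into[OF \<beta>])
  have \<beta>\<gamma>: "\<beta> (\<gamma> v) = v" for v unfolding \<gamma>_def using bij_betw_inv_into_right[OF \<beta>] by simp
  have \<gamma>\<beta>: "\<gamma> (\<beta> i) = i" if "i \<in> {1..n}" for i
    unfolding \<gamma>_def using bij_betw_inv_into_left[OF \<beta> that] .
  have \<gamma>_in: "\<gamma> v \<in> {1..n}" for v using \<gamma> by (meson UNIV_I bij_betwE)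
  define \<psi> where "\<psi> f = (\<lambda>i. if i \<in> {1..n} then \<gamma> (f (\<beta> i)) else i)" for f :: "'v \<Rightarrow> 'v"
  have permutes: "\<psi> f permutes {1..n}" if "bij f" for f
  proof (rule bij_imp_permutes)
    have "bij_betw (\<gamma> \<circ> f \<circ> \<beta>) {1..n} {1..n}"
      using bij_betw_trans[OF bij_betw_trans[OF \<beta> that] \<gamma>] by (simp add: o_assoc)
    then show "bij_betw (\<psi> f) {1..n} {1..n}"
      by (rule bij_betw_cong[THEN iffD1, rotated]) (simp add: \<psi>_def)
    show "\<And>x. x \<notin> {1..n} \<Longrightarrow> \<psi> f x = x" unfolding \<psi>_def by presburger
  qed
  have hom: "\<psi> (f \<circ> g) = \<psi> f \<circ> \<psi> g" for f g
    using \<gamma>_in by (auto simp: \<psi>_def \<beta>\<gamma> fun_eq_iff)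
  have inj: "inj_on \<psi> {f. bij f}"
  proof (rule inj_onI)
    fix f g :: "'v \<Rightarrow> 'v" assume "\<psi> f = \<psi> g"
    then have "\<gamma> (f (\<beta> (\<gamma> v))) = \<gamma> (g (\<beta> (\<gamma> v)))" for v
      using \<gamma>_in[of v] by (metis \<psi>_def)
    then show "f = g" by (metis \<beta>\<gamma> ext)
  qed
  have surj: "p \<in> \<psi> ` {f. bij f}" if p: "p permutes {1..n}" for p
  proof (rule image_eqI)
    show "p = \<psi> (\<beta> \<circ> p \<circ> \<gamma>)"
      using \<gamma>\<beta> permutes_in_image[OF p] permutes_not_in[OF p] by (auto simp: \<psi>_def fun_eq_iff)
    show "\<beta> \<circ> p \<circ> \<gamma> \<in> {f. bij f}"
      using bij_betw_trans[OF bij_betw_trans[OF \<gamma> permutes_imp_bij[OF p]] \<beta>]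
      by (simp add: o_assoc)
  qed
  have "bij_betw \<psi> {f. bij f} {p. p permutes {1..n}}"
    using inj permutes surj by (intro bij_betw_imageI) auto
  then have "\<psi> \<in> iso (perm_grp {f. bij f}) (sym_group n)"
    unfolding iso_def hom_def perm_grp_def sym_group_def using permutes hom by auto
  then show ?thesis unfolding is_iso_def by blast
qed

section \<open>The affine group HN with SL_2(q) normal in H\<close>

locale affine_sl2 =
  fixes H :: "(('f::{field,finite} \<times> 'f) \<Rightarrow> ('f \<times> 'f)) set"
  assumes subgroup_GL: "subgroup H (perm_grp GL_V)"
    and SL2_normal: "SL2 \<lhd> perm_grp H"
begin

lemma H_group: "group (perm_grp H)"
  using SL2_normal normal_def by blast

lemma H_bij: "h \<in> H \<Longrightarrow> bij h"
  and H_additive: "h \<in> H \<Longrightarrow> additive h"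
  using subgroup.subset[OF subgroup_GL] unfolding perm_grp_def GL_V_def additive_def by auto

lemma SL2_subset: "SL2 \<subseteq> H"
  using subgroup.subset[OF normal.axioms(1)[OF SL2_normal]] by (simp add: perm_grp_def)

lemma H_id: "id \<in> H"
  and H_comp: "h \<in> H \<Longrightarrow> k \<in> H \<Longrightarrow> h \<circ> k \<in> H"
  using monoid.one_closed monoid.m_closed group.is_monoid[OF H_group]
  by (fastforce simp: perm_grp_def)+

lemma H_group_inv: "h \<in> H \<Longrightarrow> inv\<^bsub>perm_grp H\<^esub> h = inv' h"
  using group.l_inv[OF H_group, of h] group.r_inv[OF H_group, of h]
  by (intro inv_unique_comp[symmetric]) (simp_all add: perm_grp_def)

lemma H_inv: "h \<in> H \<Longrightarrow> inv' h \<in> H"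
  using group.inv_closed[OF H_group, of h] H_group_inv by (simp add: perm_grp_def)

lemma SL2_conj: "c \<in> H \<Longrightarrow> S \<in> SL2 \<Longrightarrow> c \<circ> S \<circ> inv' c \<in> SL2"
  using normal.inv_op_closed2[OF SL2_normal, of c S] H_group_inv by (simp add: perm_grp_def)

lemma H_semilinear:
  assumes "c \<in> H"
  obtains \<phi> where "additive \<phi>" "\<phi> 1 = 1" "\<And>l v. c (smul l v) = smul (\<phi> l) (c v)"
proof (rule normaliser_of_SL2_semilinear[OF H_bij[OF assms] H_additive[OF assms]])
  show "c \<circ> S \<circ> inv' c \<in> SL2" if "S \<in> SL2" for S using SL2_conj[OF assms that] .
  show "inv' c \<circ> S \<circ> c \<in> SL2" if "S \<in> SL2" for S
    using SL2_conj[OF H_inv[OF assms] that] H_bij[OF assms] by (simp add: inv_inv_eq)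
qed (use that in blast)

lemma affine_mem: "h \<in> H \<Longrightarrow> (\<lambda>v. h v + w) \<in> affine_grp H"
  unfolding affine_grp_def by blast

lemma affine_cases:
  assumes "f \<in> affine_grp H"
  obtains h w where "h \<in> H" "f = (\<lambda>v. h v + w)"
  using assms unfolding affine_grp_def by blast

sublocale G: bij_group "affine_grp H"
proof
  fix f g assume f: "f \<in> affine_grp H"
  then obtain h w where h: "h \<in> H" and f_eq: "f = (\<lambda>v. h v + w)" by (rule affine_cases)
  have inv_h: "inv' h (h v) = v" and h_inv: "h (inv' h v) = v" for v
    using H_bij[OF h] by (simp_all add: bij_is_inj bij_is_surj surj_f_inv_f)
  define f' where "f' = (\<lambda>v. inv' h v + - inv' h w)"
  have "f' \<circ> f = id" "f \<circ> f' = id"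
    using additive.add[OF additive_inv[OF H_additive[OF h] H_bij[OF h]]]
      additive.diff[OF H_additive[OF h]]
    by (auto simp: f_eq f'_def fun_eq_iff inv_h h_inv)
  moreover have "f' \<in> affine_grp H" unfolding f'_def by (rule affine_mem[OF H_inv[OF h]])
  ultimately show "bij f" "inv' f \<in> affine_grp H"
    using inv_unique_comp[of f f'] o_bij[of f' f] by auto
  assume "g \<in> affine_grp H"
  then obtain k u where k: "k \<in> H" and g_eq: "g = (\<lambda>v. k v + u)" by (rule affine_cases)
  have "f \<circ> g = (\<lambda>v. (h \<circ> k) v + (h u + w))"
    by (simp add: f_eq g_eq fun_eq_iff additive.add[OF H_additive[OF h]] add.assoc)
  then show "f \<circ> g \<in> affine_grp H" using affine_mem[OF H_comp[OF h k]] by simp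
next
  show "id \<in> affine_grp H" using affine_mem[OF H_id, of 0] by (simp add: id_def)
qed

lemma conj_class_lin_part:
  assumes "f \<in> conj_class (affine_grp H) (\<lambda>v. h v + w)" "additive h"
  obtains c where "c \<in> H" "lin_part f = c \<circ> h \<circ> inv' c"
proof -
  obtain a where "a \<in> affine_grp H" "f \<circ> a = a \<circ> (\<lambda>v. h v + w)"
    using assms(1) G.conj_class_iff by blast
  moreover from this obtain c u where "c \<in> H" "a = (\<lambda>v. c v + u)" by (metis affine_cases)
  ultimately show ?thesis
    using lin_part_intertwined H_additive H_bij assms(2) that by metis
qed

end

section \<open>Two derangements in different classes\<close>

definition unit_translation :: "'f::field \<times> 'f \<Rightarrow> 'f \<times> 'f" where
  "unit_translation v = v + (1, 0)"

definition shifted_shear :: "'f::field \<Rightarrow> 'f \<times> 'f \<Rightarrow> 'f \<times> 'f" where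
  "shifted_shear \<beta> v = upper_tr \<beta> v + (0, 1)"

lemma derangement_unit_translation: "derangement unit_translation"
  by (simp add: unit_translation_def derangement_def prod_eq_iff)

lemma derangement_shifted_shear: "derangement (shifted_shear \<beta>)"
  by (simp add: shifted_shear_def derangement_def prod_eq_iff sl2_map_def split: prod.splits)

lemma lin_part_shifted_shear: "lin_part (shifted_shear \<beta>) = upper_tr \<beta>"
  unfolding shifted_shear_def[abs_def]
  by (rule lin_part_affine[OF additive_sl2_map])

lemma upper_tr_eq_id_iff: "upper_tr \<beta> = id \<longleftrightarrow> \<beta> = 0"
  by (auto simp: fun_eq_iff sl2_map_def)

definition det2 :: "('f::field \<times> 'f \<Rightarrow> 'f \<times> 'f) \<Rightarrow> 'f" where
  "det2 c = fst (c (1, 0)) * snd (c (0, 1)) - fst (c (0, 1)) * snd (c (1, 0))"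

context affine_sl2
begin

lemma unit_translation_mem: "unit_translation \<in> affine_grp H"
  using affine_mem[OF H_id] unfolding unit_translation_def[abs_def] id_def by blast

lemma shifted_shear_mem: "shifted_shear \<beta> \<in> affine_grp H"
  using affine_mem SL2_subset upper_tr_SL2 unfolding shifted_shear_def[abs_def] by blast

lemma separate_from_translation:
  assumes "f \<in> affine_grp H" "lin_part f \<noteq> id"
  shows "conj_class (affine_grp H) f \<noteq> conj_class (affine_grp H) unit_translation"
proof (rule G.conj_class_separate[OF assms(1), where P = "\<lambda>x. lin_part x = id"])
  fix x assume "x \<in> conj_class (affine_grp H) unit_translation"
  then obtain c where "c \<in> H" "lin_part x = c \<circ> id \<circ> inv' c"
    using conj_class_lin_part[of x id "(1, 0)"]
    by (auto simp: unit_translation_def[abs_def] additive_def)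
  then show "lin_part x = id"
    using H_bij by (auto simp: fun_eq_iff bij_is_surj surj_f_inv_f)
qed (use assms(2) in blast)

lemma separate_from_shear:
  assumes "f \<in> affine_grp H" "\<not> sq_unipotent (lin_part f)"
  shows "conj_class (affine_grp H) f \<noteq> conj_class (affine_grp H) (shifted_shear 1)"
proof (rule G.conj_class_separate[OF assms(1), where P = "\<lambda>x. sq_unipotent (lin_part x)"])
  fix x assume "x \<in> conj_class (affine_grp H) (shifted_shear 1)"
  then obtain c where "c \<in> H" "lin_part x = c \<circ> upper_tr 1 \<circ> inv' c"
    using conj_class_lin_part[of x "upper_tr 1" "(0, 1)"] additive_sl2_map
    unfolding shifted_shear_def[abs_def] by blast
  then show "sq_unipotent (lin_part x)"
    using sq_unipotent_conj H_additive H_bij sq_unipotent_upper_tr by metis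
qed (use assms(2) in blast)

lemma translation_shear_classes_distinct:
  "conj_class (affine_grp H) (shifted_shear 1) \<noteq> conj_class (affine_grp H) unit_translation"
  using separate_from_translation[OF shifted_shear_mem]
  by (simp add: lin_part_shifted_shear upper_tr_eq_id_iff)

end

section \<open>The case q \<ge> 3: a third class of derangements, and |G| > 24\<close>

context affine_sl2
begin

lemma shifted_shear_conj_det:
  assumes "shifted_shear \<beta> \<in> conj_class (affine_grp H) (shifted_shear 1)"
  obtains c where "c \<in> H" "det2 c = \<beta>"
proof -
  obtain a where a_mem: "a \<in> affine_grp H"
    and intertwine: "shifted_shear \<beta> \<circ> a = a \<circ> shifted_shear 1"
    using assms G.conj_class_iff by blast
  obtain c u where c: "c \<in> H" and a: "a = (\<lambda>v. c v + u)" using affine_cases[OF a_mem] .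
  have add: "additive c" using H_additive[OF c] .
  have e: "upper_tr \<beta> (c v + u) + (0, 1) = c (upper_tr 1 v + (0, 1)) + u" for v
    using fun_cong[OF intertwine, of v] by (simp add: a shifted_shear_def)
  obtain p r where c10: "c (1, 0) = (p, r)" by fastforce
  obtain m n where c01: "c (0, 1) = (m, n)" by fastforce
  obtain u1 u2 where u: "u = (u1, u2)" by fastforce
  have "c (upper_tr 1 (0, 1) + (0, 1)) = c (1, 0) + c (0, 1) + c (0, 1)"
    by (simp add: additive.add[OF add, symmetric])
  then have "upper_tr \<beta> (c (0, 1) + u) + (0, 1) = (p, r) + (m, n) + (m, n) + u"
    using e[of "(0, 1)"] c10 c01 by simp
  moreover have "upper_tr \<beta> u + (0, 1) = (m, n) + u"
    using e[of 0] c01 additive.zero[OF add] by simp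
  ultimately have "m = \<beta> * u2" "n = 1" "p = \<beta>" "r = 0"
    using c01 u by (auto simp: algebra_simps)
  then have "det2 c = \<beta>" using c10 c01 by (simp add: det2_def)
  then show ?thesis using that c by blast
qed

text \<open>If H contains an element c of determinant delta \<notin> {0, 1}, then composing c with a
  suitable element of SL_2(q) gives h(x, y) = (phi x + phi y, delta phi y), which fixes
  (1, 0) but does not satisfy (h - 1)^2 = 0.\<close>

lemma nonunipotent_in_H:
  assumes c: "c \<in> H" and det: "det2 c \<noteq> 0" "det2 c \<noteq> 1"
  obtains h where "h \<in> H" "h (1, 0) = (1, 0)" "\<not> sq_unipotent h"
proof -
  obtain \<phi> where \<phi>: "additive \<phi>" "\<phi> 1 = 1" "\<And>l v. c (smul l v) = smul (\<phi> l) (c v)"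
    using H_semilinear[OF c] by blast
  obtain m11 m21 where c10: "c (1, 0) = (m11, m21)" by fastforce
  obtain m12 m22 where c01: "c (0, 1) = (m12, m22)" by fastforce
  define \<delta> where "\<delta> = det2 c"
  have \<delta>: "\<delta> = m11 * m22 - m12 * m21" "\<delta> \<noteq> 0" "\<delta> \<noteq> 1"
    using det c10 c01 by (simp_all add: \<delta>_def det2_def)
  have c_apply: "c (x, y) = (\<phi> x * m11 + \<phi> y * m12, \<phi> x * m21 + \<phi> y * m22)" for x y
  proof -
    have "(x, y) = smul x (1, 0) + smul y (0, 1)" by (simp add: smul_def)
    then have "c (x, y) = c (smul x (1, 0)) + c (smul y (0, 1))"
      by (metis additive.add[OF H_additive[OF c]])
    then show ?thesis using \<phi>(3)[of x "(1, 0)"] \<phi>(3)[of y "(0, 1)"] c10 c01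
      by (simp add: smul_def algebra_simps)
  qed
  define S where "S = sl2_map ((m22 - m21) / \<delta>) ((m11 - m12) / \<delta>) (- m21) m11"
  have "S \<in> SL2"
    unfolding S_def by (rule sl2_map_in_SL2) (use \<delta> in \<open>simp add: field_simps\<close>)
  define h where "h = S \<circ> c"
  have h: "h \<in> H" unfolding h_def using H_comp SL2_subset \<open>S \<in> SL2\<close> c by blast
  have h_apply: "h (x, y) = (\<phi> x + \<phi> y, \<delta> * \<phi> y)" for x y
  proof -
    let ?P = "\<phi> x * m11 + \<phi> y * m12" and ?Q = "\<phi> x * m21 + \<phi> y * m22"
    have "(m22 - m21) * ?P + (m11 - m12) * ?Q = \<delta> * (\<phi> x + \<phi> y)"
      unfolding \<delta>(1) by Groebner_Basis.algebra
    moreover have "(- m21) * ?P + m11 * ?Q = \<delta> * \<phi> y"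
      unfolding \<delta>(1) by Groebner_Basis.algebra
    ultimately show ?thesis
      using \<delta>(2) by (simp add: h_def S_def c_apply add_divide_distrib[symmetric])
  qed
  have \<phi>0: "\<phi> 0 = 0" and \<phi>_diff: "\<phi> (\<delta> - 1) = \<phi> \<delta> - 1"
    using additive.zero[OF \<phi>(1)] additive.diff[OF \<phi>(1)] \<phi>(2) by auto
  have "h (h (0, 1) - (0, 1)) - (h (0, 1) - (0, 1))
      = (\<phi> \<delta> - 1, \<delta> * (\<phi> \<delta> - 1) - (\<delta> - 1))"
    by (simp add: h_apply \<phi>0 \<phi>(2) \<phi>_diff)
  moreover have "(\<phi> \<delta> - 1, \<delta> * (\<phi> \<delta> - 1) - (\<delta> - 1)) \<noteq> 0"
    using \<delta>(3) by (auto simp: zero_prod_def)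
  ultimately have "\<not> sq_unipotent h" unfolding sq_unipotent_def by metis
  moreover have "h (1, 0) = (1, 0)" by (simp add: h_apply \<phi>0 \<phi>(2))
  ultimately show ?thesis using that h by blast
qed

lemma third_derangement_class:
  assumes q3: "3 \<le> card (UNIV :: 'f set)"
  obtains g where "g \<in> affine_grp H" "derangement g"
    "conj_class (affine_grp H) g \<noteq> conj_class (affine_grp H) unit_translation"
    "conj_class (affine_grp H) g \<noteq> conj_class (affine_grp H) (shifted_shear 1)"
proof (cases "\<exists>c\<in>H. det2 c \<noteq> 0 \<and> det2 c \<noteq> 1")
  case True
  then obtain h where h: "h \<in> H" "h (1, 0) = (1, 0)" "\<not> sq_unipotent h"
    using nonunipotent_in_H by blast
  obtain w where der: "derangement (\<lambda>v. h v + w)"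
    using derangement_translate[OF H_additive[OF h(1)] h(2)] by (auto simp: zero_prod_def)
  have g: "(\<lambda>v. h v + w) \<in> affine_grp H" and lin: "lin_part (\<lambda>v. h v + w) = h"
    using affine_mem[OF h(1)] lin_part_affine[OF H_additive[OF h(1)]] by auto
  have "h \<noteq> id" using h(3) by (auto simp: sq_unipotent_def)
  then show ?thesis
    using that[OF g der] separate_from_translation[OF g] separate_from_shear[OF g] h(3) lin
    by auto
next
  case False
  have "\<not> UNIV \<subseteq> {0, 1 :: 'f}"
    using card_mono[of "{0, 1 :: 'f}" UNIV] q3 by auto
  then obtain \<beta> :: 'f where \<beta>: "\<beta> \<noteq> 0" "\<beta> \<noteq> 1" by blast
  have "conj_class (affine_grp H) (shifted_shear \<beta>) \<noteq> conj_class (affine_grp H) (shifted_shear 1)"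
  proof
    assume "conj_class (affine_grp H) (shifted_shear \<beta>) = conj_class (affine_grp H) (shifted_shear 1)"
    then have "shifted_shear \<beta> \<in> conj_class (affine_grp H) (shifted_shear 1)"
      using G.conj_class_self[OF shifted_shear_mem] by blast
    then show False using shifted_shear_conj_det False \<beta> by metis
  qed
  moreover have "conj_class (affine_grp H) (shifted_shear \<beta>) \<noteq> conj_class (affine_grp H) unit_translation"
    using separate_from_translation[OF shifted_shear_mem] \<beta>(1)
    by (simp add: lin_part_shifted_shear upper_tr_eq_id_iff)
  ultimately show ?thesis using that[OF shifted_shear_mem derangement_shifted_shear] by blast
qed

lemma kappa_ge_3:
  assumes "3 \<le> card (UNIV :: 'f set)"
  shows "3 \<le> kappa (affine_grp H)"
proof -
  obtain g where g: "g \<in> affine_grp H" "derangement g"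
    "conj_class (affine_grp H) g \<noteq> conj_class (affine_grp H) unit_translation"
    "conj_class (affine_grp H) g \<noteq> conj_class (affine_grp H) (shifted_shear 1)"
    using third_derangement_class[OF assms] by blast
  let ?classes = "{conj_class (affine_grp H) g | g. g \<in> affine_grp H \<and> derangement g}"
  have "{conj_class (affine_grp H) g, conj_class (affine_grp H) unit_translation,
         conj_class (affine_grp H) (shifted_shear 1)} \<subseteq> ?classes"
    using g unit_translation_mem derangement_unit_translation shifted_shear_mem
      derangement_shifted_shear by blast
  moreover have "finite ?classes" by (rule finite_subset[OF subset_UNIV]) simp
  ultimately have "card {conj_class (affine_grp H) g, conj_class (affine_grp H) unit_translation,
         conj_class (affine_grp H) (shifted_shear 1)} \<le> kappa (affine_grp H)"
    unfolding kappa_def by (rule card_mono[rotated])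
  then show ?thesis using g(3,4) translation_shear_classes_distinct by (simp add: eq_commute)
qed

end

section \<open>The case q = 2\<close>

lemma F2_cases:
  assumes "card (UNIV :: 'f::{field,finite} set) = 2"
  shows "x = 0 \<or> x = (1::'f)" and F2_one_plus_one: "(1::'f) + 1 = 0"
proof -
  have "card {0, 1::'f} = 2" by simp
  then have univ: "{0, 1::'f} = UNIV"
    using card_subset_eq[OF finite_UNIV, of "{0, 1::'f}"] assms by simp
  then show "x = 0 \<or> x = (1::'f)" by blast
  have "(1::'f) + 1 \<noteq> 1" by (metis add_cancel_right_right one_neq_zero)
  then show "(1::'f) + 1 = 0" using univ by blast
qed

lemma F2_numerals:
  assumes "(1::'f::field) + 1 = 0"
  shows "(2::'f) = 0" "-(1::'f) = 1"
  using assms by (simp_all add: eq_neg_iff_add_eq_0)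

text \<open>Over F_2 every permutation of V fixing 0 lies in SL_2(2): the three nonzero vectors are
  permuted, their sum is 0, so the map is additive, and GL_2(2) = SL_2(2).\<close>

lemma F2_inj_fixing_0_in_SL2:
  assumes F2: "card (UNIV :: 'f::{field,finite} set) = 2"
    and inj: "inj (h :: 'f \<times> 'f \<Rightarrow> 'f \<times> 'f)" and h0: "h 0 = 0"
  shows "h \<in> SL2"
proof -
  note cases = F2_cases(1)[OF F2] and num = F2_numerals[OF F2_one_plus_one[OF F2]]
  obtain a c where p: "h (1, 0) = (a, c)" by fastforce
  obtain b d where r: "h (0, 1) = (b, d)" by fastforce
  obtain s1 s2 where s: "h (1, 1) = (s1, s2)" by fastforce
  have "(a, c) \<noteq> (0, 0)" "(b, d) \<noteq> (0, 0)" "(s1, s2) \<noteq> (0, 0)"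
      "(a, c) \<noteq> (b, d)" "(a, c) \<noteq> (s1, s2)" "(b, d) \<noteq> (s1, s2)"
    using inj h0 p r s unfolding zero_prod_def by (metis injD prod.inject zero_neq_one)+
  then have "s1 = a + b \<and> s2 = c + d \<and> a * d - b * c = 1"
    using cases[of a] cases[of b] cases[of c] cases[of d] cases[of s1] cases[of s2]
    by (elim disjE) (simp_all add: num)
  moreover have "h = sl2_map a b c d"
  proof
    fix v :: "'f \<times> 'f"
    obtain x y where v: "v = (x, y)" by fastforce
    show "h v = sl2_map a b c d v"
      using cases[of x] cases[of y] h0 p r s \<open>s1 = a + b \<and> s2 = c + d \<and> a * d - b * c = 1\<close>
      unfolding v zero_prod_def by (elim disjE) simp_all
  qed
  ultimately show ?thesis by (simp add: sl2_map_in_SL2)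
qed

text \<open>A fixed-point-free affine map over F_2 whose linear part h is not the identity: the
  vectors z = (h - 1) w and w form a basis of determinant 1 on which h z = z.\<close>

lemma F2_derangement_basis:
  fixes a b c d w1 w2 :: "'f::{field,finite}"
  assumes F2: "card (UNIV :: 'f set) = 2"
    and not_id: "\<not> (a = 1 \<and> b = 0 \<and> c = 0 \<and> d = 1)" and det: "a * d - b * c = 1"
    and der: "\<And>x y. (a * x + b * y + w1, c * x + d * y + w2) \<noteq> (x, y)"
  defines "z1 \<equiv> a * w1 + b * w2 - w1" and "z2 \<equiv> c * w1 + d * w2 - w2"
  shows "a * z1 + b * z2 = z1" "c * z1 + d * z2 = z2" "z1 * w2 - w1 * z2 = 1"
proof -
  note cases = F2_cases(1)[OF F2] and num = F2_numerals[OF F2_one_plus_one[OF F2]]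
  have "(a * 0 + b * 0 + w1, c * 0 + d * 0 + w2) \<noteq> (0, 0)"
    "(a * 1 + b * 0 + w1, c * 1 + d * 0 + w2) \<noteq> (1, 0)"
    "(a * 0 + b * 1 + w1, c * 0 + d * 1 + w2) \<noteq> (0, 1)"
    "(a * 1 + b * 1 + w1, c * 1 + d * 1 + w2) \<noteq> (1, 1)"
    using der by blast+
  then have "a * z1 + b * z2 = z1 \<and> c * z1 + d * z2 = z2 \<and> z1 * w2 - w1 * z2 = 1"
    using cases[of a] cases[of b] cases[of c] cases[of d] cases[of w1] cases[of w2] not_id det
    unfolding z1_def z2_def by (elim disjE) (simp_all add: num)
  then show "a * z1 + b * z2 = z1" "c * z1 + d * z2 = z2" "z1 * w2 - w1 * z2 = 1" by auto
qed

context affine_sl2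
begin

text \<open>Translations by nonzero vectors are conjugate (SL_2(q) is transitive on V - {0}).\<close>

lemma translation_conj:
  assumes "w \<noteq> 0"
  shows "(\<lambda>v. v + w) \<in> conj_class (affine_grp H) unit_translation"
proof -
  obtain w1 w2 where w: "w = (w1, w2)" by fastforce
  obtain S where S: "S \<in> SL2" "S (1, 0) = w"
  proof (cases "w1 = 0")
    case False
    then show ?thesis
      using that[OF sl2_map_in_SL2[of w1 "1 / w1" 0 w2]] w by simp
  next
    case True
    then have "w2 \<noteq> 0" using assms w by (simp add: zero_prod_def)
    then show ?thesis
      using that[OF sl2_map_in_SL2[of 0 0 "- 1 / w2" w2]] w True by simp
  qed
  have "S \<in> affine_grp H" using affine_mem[of S 0] S(1) SL2_subset by auto
  moreover have "(\<lambda>v. v + w) \<circ> S = S \<circ> unit_translation"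
    using flinearD(1)[OF SL2_flinear[OF S(1)]] S(2) by (simp add: unit_translation_def fun_eq_iff)
  ultimately show ?thesis using G.conj_class_iff by blast
qed

lemma F2_shear_conj:
  assumes F2: "card (UNIV :: 'f set) = 2" and h: "h \<in> H" "h \<noteq> id"
    and der: "derangement (\<lambda>v. h v + w)"
  shows "(\<lambda>v. h v + w) \<in> conj_class (affine_grp H) (shifted_shear 1)"
proof -
  obtain a b c d where h_eq: "h = sl2_map a b c d" and det: "a * d - b * c = 1"
    using F2_inj_fixing_0_in_SL2[OF F2 bij_is_inj[OF H_bij[OF h(1)]] additive.zero[OF H_additive[OF h(1)]]]
    unfolding SL2_def by blast
  obtain w1 w2 where w: "w = (w1, w2)" by fastforce
  have not_id: "\<not> (a = 1 \<and> b = 0 \<and> c = 0 \<and> d = 1)"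
    using h(2) h_eq by (auto simp: sl2_map_def fun_eq_iff)
  have "(a * x + b * y + w1, c * x + d * y + w2) \<noteq> (x, y)" for x y
    using der unfolding derangement_def h_eq w by simp
  note basis = F2_derangement_basis[OF F2 not_id det this]
  define z1 where "z1 = a * w1 + b * w2 - w1"
  define z2 where "z2 = c * w1 + d * w2 - w2"
  define C where "C = sl2_map z1 w1 z2 w2"
  have "C \<in> SL2" unfolding C_def z1_def z2_def by (rule sl2_map_in_SL2[OF basis(3)])
  then have "C \<in> affine_grp H" using affine_mem[of C 0] SL2_subset by auto
  moreover have "(\<lambda>v. h v + w) \<circ> C = C \<circ> shifted_shear 1"
  proof
    fix v :: "'f \<times> 'f"
    obtain x y where v: "v = (x, y)" by fastforce
    have "a * (z1 * x + w1 * y) + b * (z2 * x + w2 * y) + w1 = z1 * (x + y) + w1 * (y + 1)"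
      using basis(1) unfolding z1_def z2_def by Groebner_Basis.algebra
    moreover have "c * (z1 * x + w1 * y) + d * (z2 * x + w2 * y) + w2 = z2 * (x + y) + w2 * (y + 1)"
      using basis(2) unfolding z1_def z2_def by Groebner_Basis.algebra
    ultimately show "((\<lambda>v. h v + w) \<circ> C) v = (C \<circ> shifted_shear 1) v"
      by (simp add: v h_eq w C_def shifted_shear_def)
  qed
  ultimately show ?thesis using G.conj_class_iff by blast
qed

lemma kappa_F2:
  assumes F2: "card (UNIV :: 'f set) = 2"
  shows "kappa (affine_grp H) = 2"
proof -
  let ?cl = "conj_class (affine_grp H)"
  have "{?cl g | g. g \<in> affine_grp H \<and> derangement g} = {?cl unit_translation, ?cl (shifted_shear 1)}"
  proof (intro equalityI subsetI)
    fix C assume "C \<in> {?cl g | g. g \<in> affine_grp H \<and> derangement g}"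
    then obtain g where g: "g \<in> affine_grp H" "derangement g" and C: "C = ?cl g" by blast
    obtain h w where h: "h \<in> H" and g_eq: "g = (\<lambda>v. h v + w)" using affine_cases[OF g(1)] .
    show "C \<in> {?cl unit_translation, ?cl (shifted_shear 1)}"
    proof (cases "h = id")
      case True
      then have "w \<noteq> 0" using g(2) g_eq by (auto simp: derangement_def)
      then have "g \<in> ?cl unit_translation" using translation_conj True g_eq by simp
      then show ?thesis using C G.conj_class_eq by blast
    next
      case False
      then have "g \<in> ?cl (shifted_shear 1)" using F2_shear_conj[OF F2 h] g(2) g_eq by simp
      then show ?thesis using C G.conj_class_eq by blast
    qed
  next
    fix C assume "C \<in> {?cl unit_translation, ?cl (shifted_shear 1)}"
    then show "C \<in> {?cl g | g. g \<in> affine_grp H \<and> derangement g}"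
      using unit_translation_mem derangement_unit_translation shifted_shear_mem
        derangement_shifted_shear by blast
  qed
  then show ?thesis unfolding kappa_def using translation_shear_classes_distinct by simp
qed

lemma affine_grp_F2:
  assumes F2: "card (UNIV :: 'f set) = 2"
  shows "affine_grp H = {f. bij f}"
proof (intro equalityI subsetI)
  fix f assume "f \<in> affine_grp H"
  then show "f \<in> {f. bij f}" using G.bij by blast
next
  fix f :: "'f \<times> 'f \<Rightarrow> 'f \<times> 'f" assume "f \<in> {f. bij f}"
  then have "inj f" by (simp add: bij_is_inj)
  then have "inj (\<lambda>v. f v - f 0)" unfolding inj_def by simp
  then have "(\<lambda>v. f v - f 0) \<in> H" using F2_inj_fixing_0_in_SL2[OF F2] SL2_subset by auto
  then show "f \<in> affine_grp H" using affine_mem[of "\<lambda>v. f v - f 0" "f 0"] by simp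
qed

lemma iso_S4_F2:
  assumes F2: "card (UNIV :: 'f set) = 2"
  shows "perm_grp (affine_grp H) \<cong> sym_group 4"
proof -
  have "card (UNIV :: ('f \<times> 'f) set) = 4" using F2 card_UNIV_pair[where 'a = 'f] by simp
  then show ?thesis unfolding affine_grp_F2[OF F2] by (rule perm_grp_all_bij_iso)
qed

text \<open>H contains the identity and the two unit transvections.\<close>

lemma card_H_ge_3: "3 \<le> card H"
proof -
  have "id \<noteq> upper_tr (1::'f)" using upper_tr_eq_id_iff[of 1] by (metis zero_neq_one)
  moreover have "id \<noteq> lower_tr (1::'f)" by (auto dest!: fun_cong[of _ _ "(1, 0)"])
  moreover have "upper_tr 1 \<noteq> lower_tr (1::'f)" by (auto dest!: fun_cong[of _ _ "(0, 1)"])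
  ultimately have "card {id, upper_tr 1, lower_tr (1::'f)} = 3" by simp
  moreover have "{id, upper_tr 1, lower_tr 1} \<subseteq> H"
    using H_id SL2_subset upper_tr_SL2 lower_tr_SL2 by blast
  ultimately show ?thesis by (metis card_mono finite_UNIV finite_subset subset_UNIV)
qed

text \<open>For q \<ge> 3, |G| = |H| q^2 \<ge> 3 * 9 > 24 = |S_4|.\<close>

lemma not_iso_S4:
  assumes q3: "3 \<le> card (UNIV :: 'f set)"
  shows "\<not> perm_grp (affine_grp H) \<cong> sym_group 4"
proof
  assume "perm_grp (affine_grp H) \<cong> sym_group 4"
  then have "card (affine_grp H) = 24"
    using iso_same_card sym_group_card_carrier[of 4] by (fastforce simp: perm_grp_def fact_numeral)
  moreover have "3 \<le> card H" by (rule card_H_ge_3)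
  moreover have "9 \<le> card (UNIV :: ('f \<times> 'f) set)"
    unfolding card_UNIV_pair using mult_le_mono[OF q3 q3] by simp
  moreover have "card (affine_grp H) = card H * card (UNIV :: ('f \<times> 'f) set)"
    using card_affine_grp additive.zero H_additive by blast
  ultimately show False using mult_le_mono[of 3 "card H" 9 "card (UNIV :: ('f \<times> 'f) set)"] by simp
qed

end

theorem proposition4p8:
  fixes H :: "(('f::{field,finite} \<times> 'f) \<Rightarrow> ('f \<times> 'f)) set"
    and p k :: nat
  assumes "Factorial_Ring.prime p"
    and "card (UNIV :: 'f set) ^ 2 = p ^ k"
    and "subgroup H (perm_grp GL_V)"
    and "SL2 \<lhd> perm_grp H"
    and "two_transitive (affine_grp H)"
    and "\<not> frobenius (affine_grp H)"
  shows "kappa (affine_grp H) = 2 \<longleftrightarrow> perm_grp (affine_grp H) \<cong> sym_group 4"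
proof -
  interpret affine_sl2 H by (rule affine_sl2.intro[OF assms(3,4)])
  have "2 \<le> card (UNIV :: 'f set)"
    using card_mono[of UNIV "{0, 1 :: 'f}"] by simp
  then consider "card (UNIV :: 'f set) = 2" | "3 \<le> card (UNIV :: 'f set)" by linarith
  then show ?thesis
  proof cases
    case 1
    then show ?thesis using kappa_F2 iso_S4_F2 by simp
  next
    case 2
    then show ?thesis using kappa_ge_3 not_iso_S4 by fastforce
  qed
qed

end
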